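(* For every filter $\Xi\in P_{III*}$, the class $\mathcal{C}_{\Xi\text{-unc}}$ is nonempty if and only if $\wedge\Xi\not\subseteq\vee\overline{\Xi}$ (i.e. $\wedge\Xi\not\preceq\vee\overline{\Xi}$).
   Context: Let $n\ge1$ and $L=\{1,\dots,n\}$. For each $i\in L$ let $\mathcal H_i$ be a Hilbert space with $1<\dim\mathcal H_i<\infty$; for $X\subseteq L$ put $\mathcal H_X=\bigotimes_{i\in X}\mathcal H_i$ and let $\mathcal D_X$ be the set of density operators (positive semidefinite, trace one) on $\mathcal H_X$. $P_I$ denotes the set of partitions of $L$ (sets of nonempty pairwise disjoint subsets of $L$ whose union is $L$), partially ordered by refinement: $\upsilon\preceq\xi$ iff every part of $\upsilon$ is contained in some part of $\xi$. For $\xi\in P_I$, $\mathcal D_{\xi\text{-unc}}=\{\varrho\in\mathcal D_L:\ \varrho=\bigotimes_{X\in\xi}\varrho_X \text{ for some } \varrho_X\in\mathcal D_X\}$. For any set $S\subseteq P_I$ of partitions, $\mathcal D_{S\text{-unc}}=\bigcup_{\xi\in S}\mathcal D_{\xi\text{-unc}}$ (so $\mathcal D_{\emptyset\text{-unc}}=\emptyset$). $P_{II}$ is the set of nonempty down-sets (ideals) of $(P_I,\preceq)$, partially ordered by inclusion ($\boldsymbol\upsilon\preceq\boldsymbol\xi$ iff $\boldsymbol\upsilon\subseteq\boldsymbol\xi$); meets and joins in $P_{II}$ are intersections and unions. $P_{II*}\subseteq P_{II}$ is an arbitrary fixed nonempty subset with the induced order, and $P_{III*}$ is the set of nonempty up-sets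 of $P_{II*}$ (nonempty $\Xi\subseteq P_{II*}$ such that $\boldsymbol\xi\in\Xi$, $\boldsymbol\upsilon\in P_{II*}$, $\boldsymbol\xi\subseteq\boldsymbol\upsilon$ imply $\boldsymbol\upsilon\in\Xi$). For $\Xi\in P_{III*}$: $\overline{\Xi}=P_{II*}\setminus\Xi$, $\wedge\Xi=\bigcap_{\boldsymbol\xi\in\Xi}\boldsymbol\xi$, $\vee\overline\Xi=\bigcup_{\boldsymbol\xi'\in\overline\Xi}\boldsymbol\xi'$ (which is $\emptyset$ if $\overline\Xi=\emptyset$); these are sets of partitions, compared by inclusion. The class of strictly $\Xi$-uncorrelated states is $\mathcal C_{\Xi\text{-unc}}=\bigcap_{\boldsymbol\xi'\in\overline\Xi}(\mathcal D_L\setminus\mathcal D_{\boldsymbol\xi'\text{-unc}})\cap\bigcap_{\boldsymbol\xi\in\Xi}\mathcal D_{\boldsymbol\xi\text{-unc}}$. *)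

theory Defs
  imports Complex_Main "HOL-Library.Complex_Order"
begin

text \<open>Subsystem i (i in L = {1..n}) is modelled by the Hilbert space C^(d i) with its
standard basis. A basis vector of H_X is a multi-index f :: nat => nat with f i < d i
for i in X and f i = 0 outside X. Operators on H_X are matrices indexed by such
multi-indices; we make them zero outside the basis so that they are uniquely determined.\<close>

definition basis_idx :: "(nat \<Rightarrow> nat) \<Rightarrow> nat set \<Rightarrow> (nat \<Rightarrow> nat) set" where
  "basis_idx d X = {f. (\<forall>i\<in>X. f i < d i) \<and> (\<forall>i. i \<notin> X \<longrightarrow> f i = 0)}"

definition restr :: "(nat \<Rightarrow> nat) \<Rightarrow> nat set \<Rightarrow> (nat \<Rightarrow> nat)" where
  "restr f X = (\<lambda>i. if i \<in> X then f i else 0)"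

type_synonym op = "(nat \<Rightarrow> nat) \<Rightarrow> (nat \<Rightarrow> nat) \<Rightarrow> complex"

definition dens :: "(nat \<Rightarrow> nat) \<Rightarrow> nat set \<Rightarrow> op set" where
  "dens d X = {\<rho>.
     (\<forall>f g. (f \<notin> basis_idx d X \<or> g \<notin> basis_idx d X) \<longrightarrow> \<rho> f g = 0) \<and>
     (\<forall>v :: (nat \<Rightarrow> nat) \<Rightarrow> complex.
        0 \<le> (\<Sum>f\<in>basis_idx d X. \<Sum>g\<in>basis_idx d X. cnj (v f) * \<rho> f g * v g)) \<and>
     (\<Sum>f\<in>basis_idx d X. \<rho> f f) = 1}"

definition is_partition :: "nat set \<Rightarrow> nat set set \<Rightarrow> bool" where
  "is_partition L \<xi> \<longleftrightarrow> (\<forall>X\<in>\<xi>. X \<noteq> {}) \<and>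
     (\<forall>X\<in>\<xi>. \<forall>Y\<in>\<xi>. X \<noteq> Y \<longrightarrow> X \<inter> Y = {}) \<and> \<Union>\<xi> = L"

definition PI :: "nat \<Rightarrow> nat set set set" where
  "PI n = {\<xi>. is_partition {1..n} \<xi>}"

definition refines :: "nat set set \<Rightarrow> nat set set \<Rightarrow> bool" where
  "refines \<upsilon> \<xi> \<longleftrightarrow> (\<forall>X\<in>\<upsilon>. \<exists>Y\<in>\<xi>. X \<subseteq> Y)"

definition PII :: "nat \<Rightarrow> nat set set set set" where
  "PII n = {S. S \<noteq> {} \<and> S \<subseteq> PI n \<and>
     (\<forall>\<xi>\<in>S. \<forall>\<upsilon>\<in>PI n. refines \<upsilon> \<xi> \<longrightarrow> \<upsilon> \<in> S)}"

text \<open>P_III*: nonempty up-sets of P_II* (ordered by inclusion).\<close>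
definition PIII :: "nat set set set set \<Rightarrow> nat set set set set set" where
  "PIII Pstar = {\<Xi>. \<Xi> \<noteq> {} \<and> \<Xi> \<subseteq> Pstar \<and>
     (\<forall>x\<in>\<Xi>. \<forall>y\<in>Pstar. x \<subseteq> y \<longrightarrow> y \<in> \<Xi>)}"

definition unc :: "nat \<Rightarrow> (nat \<Rightarrow> nat) \<Rightarrow> nat set set \<Rightarrow> op set" where
  "unc n d \<xi> = {\<rho> \<in> dens d {1..n}. \<exists>\<rho>s :: nat set \<Rightarrow> op.
     (\<forall>X\<in>\<xi>. \<rho>s X \<in> dens d X) \<and>
     \<rho> = (\<lambda>f g. if f \<in> basis_idx d {1..n} \<and> g \<in> basis_idx d {1..n}
                 then (\<Prod>X\<in>\<xi>. \<rho>s X (restr f X) (restr g X)) else 0)}"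

definition unc_set :: "nat \<Rightarrow> (nat \<Rightarrow> nat) \<Rightarrow> nat set set set \<Rightarrow> op set" where
  "unc_set n d S = (\<Union>\<xi>\<in>S. unc n d \<xi>)"

definition C_unc :: "nat \<Rightarrow> (nat \<Rightarrow> nat) \<Rightarrow> nat set set set set \<Rightarrow> nat set set set set \<Rightarrow> op set" where
  "C_unc n d Pstar \<Xi> =
     (\<Inter>\<xi>'\<in>Pstar - \<Xi>. dens d {1..n} - unc_set n d \<xi>') \<inter> (\<Inter>\<xi>\<in>\<Xi>. unc_set n d \<xi>)"

end

theory Submission
  imports Defs "HOL-Library.FuncSet"
begin

text \<open>A state that is both \<alpha>- and \<beta>-uncorrelated is also uncorrelated with respect to the meet of
\<alpha> and \<beta>: its factor on a block X of \<alpha> is its marginal on X, and \<beta>-uncorrelatedness splits that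
marginal over the pieces X \<inter> Y. Hence a strictly \<Xi>-uncorrelated state is \<pi>-uncorrelated for a
single partition \<pi> lying in every ideal of \<Xi>, i.e. in \<Inter>\<Xi>, and \<pi> is not in \<Union>(Pstar - \<Xi>)
because the state lies in no ideal outside \<Xi>.

Conversely, for \<pi> in \<Inter>\<Xi> but not in \<Union>(Pstar - \<Xi>) take the tensor product of GHZ states over
the blocks of \<pi>. For a block Y of \<upsilon>, the diagonal entries of a \<upsilon>-uncorrelated state at indicator
indices satisfy \<rho>(1_\<emptyset>) \<rho>(1_X) = \<rho>(1_(X - Y)) \<rho>(1_(X \<inter> Y)). For the GHZ product the left side is
nonzero, while the right side vanishes when Y splits a block X of \<pi>. So the GHZ product is
\<upsilon>-uncorrelated only if \<pi> refines \<upsilon>, i.e. it lies exactly in the ideals that contain \<pi>.\<close>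

section \<open>Multi-indices\<close>

text \<open>On indices with disjoint supports Z and C the sum is the glued basis index of
  H_(Z \<union> C).\<close>
definition merge_idx :: "(nat \<Rightarrow> nat) \<Rightarrow> (nat \<Rightarrow> nat) \<Rightarrow> nat \<Rightarrow> nat" where
  "merge_idx f h = (\<lambda>i. f i + h i)"

lemma finite_basis_idx:
  assumes "finite X"
  shows "finite (basis_idx d X)"
proof -
  have "basis_idx d X \<subseteq> (\<lambda>f. restr f X) ` (PiE X (\<lambda>i. {..<d i}))"
  proof
    fix g assume g: "g \<in> basis_idx d X"
    then have "g = restr (restrict g X) X" "restrict g X \<in> PiE X (\<lambda>i. {..<d i})"
      by (auto simp: restr_def basis_idx_def fun_eq_iff)
    then show "g \<in> (\<lambda>f. restr f X) ` (PiE X (\<lambda>i. {..<d i}))" by blast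
  qed
  then show ?thesis using assms finite_subset by (blast intro: finite_PiE)
qed

lemma basis_idx_empty: "basis_idx d {} = {\<lambda>_. 0}"
  by (auto simp: basis_idx_def)

lemma merge_idx_in_basis_idx:
  "f \<in> basis_idx d Z \<Longrightarrow> h \<in> basis_idx d C \<Longrightarrow> Z \<inter> C = {} \<Longrightarrow> merge_idx f h \<in> basis_idx d (Z \<union> C)"
  by (auto simp: merge_idx_def basis_idx_def)

lemma merge_idx_in_basis_idx_Diff:
  assumes "f \<in> basis_idx d Z" "h \<in> basis_idx d (L - Z)" "Z \<subseteq> L"
  shows "merge_idx f h \<in> basis_idx d L"
  using merge_idx_in_basis_idx[OF assms(1,2)] assms(3) by (simp add: Un_absorb1 Un_Diff_cancel)

lemma restr_merge_idx:
  assumes "f \<in> basis_idx d Z" "h \<in> basis_idx d (L - Z)"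
  shows "restr (merge_idx f h) (L - Z) = h" "restr (merge_idx f h) Z = f"
  using assms by (auto simp: restr_def merge_idx_def basis_idx_def fun_eq_iff)

lemma restr_in_basis_idx: "f \<in> basis_idx d A \<Longrightarrow> restr f Z \<in> basis_idx d (A \<inter> Z)"
  by (auto simp: restr_def basis_idx_def)

lemma restr_restr: "restr (restr f X) Y = restr f (X \<inter> Y)"
  by (auto simp: restr_def fun_eq_iff)

lemma sum_basis_idx_Un:
  assumes "finite A" "finite C" "A \<inter> C = {}"
  shows "(\<Sum>k\<in>basis_idx d (A \<union> C). F k) = (\<Sum>f\<in>basis_idx d A. \<Sum>h\<in>basis_idx d C. F (merge_idx f h))"
proof -
  have "(\<Sum>f\<in>basis_idx d A. \<Sum>h\<in>basis_idx d C. F (merge_idx f h))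
      = (\<Sum>p\<in>basis_idx d A \<times> basis_idx d C. F (merge_idx (fst p) (snd p)))"
    by (simp add: sum.cartesian_product split_beta)
  also have "\<dots> = (\<Sum>k\<in>basis_idx d (A \<union> C). F k)"
  proof (rule sum.reindex_bij_witness[where j = "\<lambda>p. merge_idx (fst p) (snd p)"
                                        and i = "\<lambda>k. (restr k A, restr k C)"])
    fix p assume "p \<in> basis_idx d A \<times> basis_idx d C"
    then show "(restr (merge_idx (fst p) (snd p)) A, restr (merge_idx (fst p) (snd p)) C) = p"
      and "merge_idx (fst p) (snd p) \<in> basis_idx d (A \<union> C)"
      using assms(3) by (cases p; auto simp: restr_def merge_idx_def basis_idx_def fun_eq_iff)+
  next
    fix k assume "k \<in> basis_idx d (A \<union> C)"
    then show "merge_idx (fst (restr k A, restr k C)) (snd (restr k A, restr k C)) = k"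
      and "(restr k A, restr k C) \<in> basis_idx d A \<times> basis_idx d C"
      using assms(3) by (auto simp: restr_def merge_idx_def basis_idx_def fun_eq_iff)
  qed simp
  finally show ?thesis by simp
qed

lemma sum_basis_idx_Diff:
  assumes "finite L" "Z \<subseteq> L"
  shows "(\<Sum>k\<in>basis_idx d L. F k) = (\<Sum>f\<in>basis_idx d Z. \<Sum>h\<in>basis_idx d (L - Z). F (merge_idx f h))"
proof -
  have "L = Z \<union> (L - Z)" using assms(2) by blast
  then show ?thesis
    using sum_basis_idx_Un[of Z "L - Z"] assms finite_subset by (metis Diff_disjoint finite_Diff)
qed

lemma sum_basis_idx_UN_prod:
  fixes F :: "'i \<Rightarrow> (nat \<Rightarrow> nat) \<Rightarrow> 'a::comm_semiring_1"
  assumes "finite I" "\<forall>i\<in>I. finite (B i)" "\<forall>i\<in>I. \<forall>j\<in>I. i \<noteq> j \<longrightarrow> B i \<inter> B j = {}"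
  shows "(\<Sum>k\<in>basis_idx d (\<Union>i\<in>I. B i). \<Prod>i\<in>I. F i (restr k (B i)))
       = (\<Prod>i\<in>I. \<Sum>f\<in>basis_idx d (B i). F i f)"
  using assms
proof (induction I rule: finite_induct)
  case empty
  then show ?case by (simp add: basis_idx_empty)
next
  case (insert j I)
  let ?U = "\<Union>i\<in>I. B i"
  have disj: "B i \<inter> B j = {}" if "i \<in> I" for i
    using insert.prems(2) insert.hyps(2) that by (metis insertCI)
  then have disjU: "B j \<inter> ?U = {}" by blast
  have "(\<Sum>k\<in>basis_idx d (\<Union>i\<in>insert j I. B i). \<Prod>i\<in>insert j I. F i (restr k (B i)))
     = (\<Sum>f\<in>basis_idx d (B j). \<Sum>h\<in>basis_idx d ?U.
          \<Prod>i\<in>insert j I. F i (restr (merge_idx f h) (B i)))"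
    using sum_basis_idx_Un[OF _ _ disjU] insert by simp
  also have "\<dots> = (\<Sum>f\<in>basis_idx d (B j). \<Sum>h\<in>basis_idx d ?U. F j f * (\<Prod>i\<in>I. F i (restr h (B i))))"
  proof (intro sum.cong refl)
    fix f h assume f: "f \<in> basis_idx d (B j)" and h: "h \<in> basis_idx d ?U"
    have "h i = 0" if "i \<in> B j" for i
      using h disjU that unfolding basis_idx_def by blast
    then have "restr (merge_idx f h) (B j) = f"
      using f by (auto simp: restr_def merge_idx_def basis_idx_def fun_eq_iff)
    moreover have "restr (merge_idx f h) (B i) = restr h (B i)" if "i \<in> I" for i
      using f disj[OF that] by (auto simp: restr_def merge_idx_def basis_idx_def fun_eq_iff)
    ultimately show "(\<Prod>i\<in>insert j I. F i (restr (merge_idx f h) (B i)))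
        = F j f * (\<Prod>i\<in>I. F i (restr h (B i)))"
      using insert by simp
  qed
  also have "\<dots> = (\<Sum>f\<in>basis_idx d (B j). F j f) * (\<Sum>h\<in>basis_idx d ?U. \<Prod>i\<in>I. F i (restr h (B i)))"
    by (simp add: sum_product)
  also have "\<dots> = (\<Prod>i\<in>insert j I. \<Sum>f\<in>basis_idx d (B i). F i f)"
    using insert by simp
  finally show ?case .
qed

section \<open>Partitions and their meet\<close>

lemma is_partitionD:
  assumes "finite L" "is_partition L \<gamma>"
  shows "finite \<gamma>" "\<forall>X\<in>\<gamma>. finite X" "\<forall>X\<in>\<gamma>. \<forall>Y\<in>\<gamma>. X \<noteq> Y \<longrightarrow> X \<inter> Y = {}"
    "\<Union>\<gamma> = L" "\<forall>X\<in>\<gamma>. X \<subseteq> L" "\<forall>X\<in>\<gamma>. X \<noteq> {}"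
proof -
  have "\<gamma> \<subseteq> Pow L" using assms(2) by (auto simp: is_partition_def)
  then show "finite \<gamma>" "\<forall>X\<in>\<gamma>. finite X"
    using assms(1) by (auto intro: finite_subset)
  show "\<forall>X\<in>\<gamma>. \<forall>Y\<in>\<gamma>. X \<noteq> Y \<longrightarrow> X \<inter> Y = {}" "\<Union>\<gamma> = L" "\<forall>X\<in>\<gamma>. X \<subseteq> L" "\<forall>X\<in>\<gamma>. X \<noteq> {}"
    using assms(2) by (auto simp: is_partition_def)
qed

lemma finite_PI: "finite (PI n)"
proof -
  have "PI n \<subseteq> Pow (Pow {1..n})" unfolding PI_def is_partition_def by blast
  then show ?thesis by (rule finite_subset) simp
qed

lemma finite_PII: "finite (PII n)"
  by (rule finite_subset[of _ "Pow (PI n)"]) (auto simp: PII_def finite_PI)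

lemma PII_subset_PI: "\<xi> \<in> PII n \<Longrightarrow> \<xi> \<subseteq> PI n"
  unfolding PII_def by blast

lemma PII_downward_closed: "\<xi> \<in> PII n \<Longrightarrow> \<pi> \<in> \<xi> \<Longrightarrow> \<upsilon> \<in> PI n \<Longrightarrow> refines \<upsilon> \<pi> \<Longrightarrow> \<upsilon> \<in> \<xi>"
  unfolding PII_def by blast

definition partition_meet :: "nat set set \<Rightarrow> nat set set \<Rightarrow> nat set set" where
  "partition_meet \<alpha> \<beta> = (\<lambda>(X, Y). X \<inter> Y) ` {(X, Y) \<in> \<alpha> \<times> \<beta>. X \<inter> Y \<noteq> {}}"

lemma partition_meetE:
  assumes "Z \<in> partition_meet \<alpha> \<beta>"
  obtains X Y where "X \<in> \<alpha>" "Y \<in> \<beta>" "Z = X \<inter> Y" "Z \<noteq> {}"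
  using assms unfolding partition_meet_def by blast

lemma Int_in_partition_meet: "X \<in> \<alpha> \<Longrightarrow> Y \<in> \<beta> \<Longrightarrow> X \<inter> Y \<noteq> {} \<Longrightarrow> X \<inter> Y \<in> partition_meet \<alpha> \<beta>"
  unfolding partition_meet_def by (auto intro!: image_eqI[where x="(X, Y)"])

lemma is_partition_meet:
  assumes "is_partition L \<alpha>" "is_partition L \<beta>"
  shows "is_partition L (partition_meet \<alpha> \<beta>)"
proof -
  have disj\<alpha>: "\<forall>X\<in>\<alpha>. \<forall>X'\<in>\<alpha>. X \<noteq> X' \<longrightarrow> X \<inter> X' = {}" and U\<alpha>: "\<Union>\<alpha> = L"
    and disj\<beta>: "\<forall>Y\<in>\<beta>. \<forall>Y'\<in>\<beta>. Y \<noteq> Y' \<longrightarrow> Y \<inter> Y' = {}" and U\<beta>: "\<Union>\<beta> = L"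
    using assms by (simp_all add: is_partition_def)
  have "Z \<inter> Z' = {}" if Z: "Z \<in> partition_meet \<alpha> \<beta>" and Z': "Z' \<in> partition_meet \<alpha> \<beta>"
    and "Z \<noteq> Z'" for Z Z'
  proof -
    obtain X Y where XY: "X \<in> \<alpha>" "Y \<in> \<beta>" "Z = X \<inter> Y" using Z by (rule partition_meetE)
    obtain X' Y' where XY': "X' \<in> \<alpha>" "Y' \<in> \<beta>" "Z' = X' \<inter> Y'" using Z' by (rule partition_meetE)
    have "X \<inter> X' = {} \<or> Y \<inter> Y' = {}"
      using disj\<alpha> disj\<beta> XY XY' \<open>Z \<noteq> Z'\<close> by metis
    then show ?thesis using XY(3) XY'(3) by blast
  qed
  moreover have "\<Union>(partition_meet \<alpha> \<beta>) \<subseteq> L"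
    using U\<alpha> by (blast elim: partition_meetE)
  moreover have "L \<subseteq> \<Union>(partition_meet \<alpha> \<beta>)"
  proof
    fix i assume "i \<in> L"
    then obtain X Y where "X \<in> \<alpha>" "Y \<in> \<beta>" "i \<in> X \<inter> Y" using U\<alpha> U\<beta> by blast
    then show "i \<in> \<Union>(partition_meet \<alpha> \<beta>)" using Int_in_partition_meet by blast
  qed
  moreover have "\<forall>Z\<in>partition_meet \<alpha> \<beta>. Z \<noteq> {}" by (blast elim: partition_meetE)
  ultimately show ?thesis unfolding is_partition_def by blast
qed

lemma refines_partition_meet: "refines (partition_meet \<alpha> \<beta>) \<alpha>" "refines (partition_meet \<alpha> \<beta>) \<beta>"
  unfolding refines_def by (blast elim: partition_meetE)+

lemma prod_partition_meet:
  fixes T :: "nat set \<Rightarrow> 'a::comm_monoid_mult"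
  assumes "finite \<alpha>" "finite \<beta>"
    and "\<forall>X\<in>\<alpha>. \<forall>X'\<in>\<alpha>. X \<noteq> X' \<longrightarrow> X \<inter> X' = {}" "\<forall>Y\<in>\<beta>. \<forall>Y'\<in>\<beta>. Y \<noteq> Y' \<longrightarrow> Y \<inter> Y' = {}"
    and "T {} = 1"
  shows "(\<Prod>X\<in>\<alpha>. \<Prod>Y\<in>\<beta>. T (X \<inter> Y)) = (\<Prod>Z\<in>partition_meet \<alpha> \<beta>. T Z)"
proof -
  let ?P = "{(X, Y) \<in> \<alpha> \<times> \<beta>. X \<inter> Y \<noteq> {}}"
  have "inj_on (\<lambda>(X, Y). X \<inter> Y) ?P"
  proof (rule inj_onI, clarify)
    fix X Y X' Y'
    assume "X \<in> \<alpha>" "Y \<in> \<beta>" "X \<inter> Y \<noteq> {}" "X' \<in> \<alpha>" "Y' \<in> \<beta>" "X \<inter> Y = X' \<inter> Y'"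
    moreover from this have "X \<inter> X' \<noteq> {}" "Y \<inter> Y' \<noteq> {}" by blast+
    ultimately show "X = X' \<and> Y = Y'" using assms(3,4) by blast
  qed
  then have "(\<Prod>Z\<in>partition_meet \<alpha> \<beta>. T Z) = (\<Prod>(X, Y)\<in>?P. T (X \<inter> Y))"
    unfolding partition_meet_def by (simp add: prod.reindex case_prod_unfold)
  also have "\<dots> = (\<Prod>(X, Y)\<in>\<alpha> \<times> \<beta>. T (X \<inter> Y))"
    using assms(1,2,5) by (intro prod.mono_neutral_left) auto
  also have "\<dots> = (\<Prod>X\<in>\<alpha>. \<Prod>Y\<in>\<beta>. T (X \<inter> Y))"
    by (simp add: prod.cartesian_product)
  finally show ?thesis by simp
qed

section \<open>Product states and marginals\<close>

definition tensor_op :: "(nat \<Rightarrow> nat) \<Rightarrow> nat set \<Rightarrow> nat set set \<Rightarrow> (nat set \<Rightarrow> op) \<Rightarrow> op" where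
  "tensor_op d L \<gamma> R = (\<lambda>f g. if f \<in> basis_idx d L \<and> g \<in> basis_idx d L
      then (\<Prod>X\<in>\<gamma>. R X (restr f X) (restr g X)) else 0)"

lemma tensor_op_apply [simp]:
  "f \<in> basis_idx d L \<Longrightarrow> g \<in> basis_idx d L \<Longrightarrow>
   tensor_op d L \<gamma> R f g = (\<Prod>X\<in>\<gamma>. R X (restr f X) (restr g X))"
  by (simp add: tensor_op_def)

lemma tensor_op_trace:
  assumes "finite L" "is_partition L \<gamma>"
  shows "(\<Sum>k\<in>basis_idx d L. tensor_op d L \<gamma> R k k) = (\<Prod>X\<in>\<gamma>. \<Sum>f\<in>basis_idx d X. R X f f)"
proof -
  note \<gamma> = is_partitionD[OF assms]
  have "(\<Sum>k\<in>basis_idx d L. tensor_op d L \<gamma> R k k)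
      = (\<Sum>k\<in>basis_idx d (\<Union>X\<in>\<gamma>. X). \<Prod>X\<in>\<gamma>. (\<lambda>X h. R X h h) X (restr k X))"
    using \<gamma>(4) by simp
  also have "\<dots> = (\<Prod>X\<in>\<gamma>. \<Sum>f\<in>basis_idx d X. R X f f)"
    by (rule sum_basis_idx_UN_prod) (use \<gamma> in auto)
  finally show ?thesis .
qed

lemma unc_iff:
  "\<rho> \<in> unc n d \<xi> \<longleftrightarrow> \<rho> \<in> dens d {1..n} \<and>
     (\<exists>R. (\<forall>X\<in>\<xi>. R X \<in> dens d X) \<and> \<rho> = tensor_op d {1..n} \<xi> R)"
  by (simp add: unc_def tensor_op_def)

lemma dens_outside_basis_idx:
  "\<rho> \<in> dens d X \<Longrightarrow> f \<notin> basis_idx d X \<or> g \<notin> basis_idx d X \<Longrightarrow> \<rho> f g = 0"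
  by (simp add: dens_def)

definition marginal :: "(nat \<Rightarrow> nat) \<Rightarrow> nat set \<Rightarrow> op \<Rightarrow> nat set \<Rightarrow> op" where
  "marginal d L \<rho> Z = (\<lambda>f g. if f \<in> basis_idx d Z \<and> g \<in> basis_idx d Z
      then (\<Sum>h\<in>basis_idx d (L - Z). \<rho> (merge_idx f h) (merge_idx g h)) else 0)"

lemma marginal_trace:
  assumes "finite L" "Z \<subseteq> L" "\<rho> \<in> dens d L"
  shows "(\<Sum>f\<in>basis_idx d Z. marginal d L \<rho> Z f f) = 1"
proof -
  have "(\<Sum>f\<in>basis_idx d Z. marginal d L \<rho> Z f f)
      = (\<Sum>f\<in>basis_idx d Z. \<Sum>h\<in>basis_idx d (L - Z). \<rho> (merge_idx f h) (merge_idx f h))"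
    by (simp add: marginal_def)
  also have "\<dots> = (\<Sum>k\<in>basis_idx d L. \<rho> k k)"
    by (rule sum_basis_idx_Diff[OF assms(1,2), symmetric])
  also have "\<dots> = 1" using assms(3) by (simp add: dens_def)
  finally show ?thesis .
qed

lemma marginal_psd:
  assumes "finite L" "Z \<subseteq> L" "\<rho> \<in> dens d L"
  shows "0 \<le> (\<Sum>f\<in>basis_idx d Z. \<Sum>g\<in>basis_idx d Z. cnj (v f) * marginal d L \<rho> Z f g * v g)"
proof -
  have fin: "finite (basis_idx d (L - Z))" using assms(1) by (simp add: finite_basis_idx)
  have "(\<Sum>f\<in>basis_idx d Z. \<Sum>g\<in>basis_idx d Z. cnj (v f) * marginal d L \<rho> Z f g * v g)
     = (\<Sum>h\<in>basis_idx d (L - Z). \<Sum>f\<in>basis_idx d Z. \<Sum>g\<in>basis_idx d Z.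
          cnj (v f) * \<rho> (merge_idx f h) (merge_idx g h) * v g)"
    by (simp add: marginal_def sum_distrib_left sum_distrib_right sum.swap[of _ "basis_idx d (L - Z)"])
  also have "0 \<le> \<dots>"
  proof (rule sum_nonneg)
    fix h assume h: "h \<in> basis_idx d (L - Z)"
    txt \<open>The h-th summand is the quadratic form of \<rho> at the vector v \<otimes> |h\<rangle>.\<close>
    define w where "w k = (if restr k (L - Z) = h then v (restr k Z) else 0)" for k
    have w: "w (merge_idx f h') = (if h' = h then v f else 0)"
      if "f \<in> basis_idx d Z" "h' \<in> basis_idx d (L - Z)" for f h'
      using restr_merge_idx[OF that] by (auto simp: w_def)
    have inner: "(\<Sum>g\<in>basis_idx d Z. \<Sum>h''\<in>basis_idx d (L - Z).
          if h' = h then (if h'' = h then cnj (v f) * \<rho> (merge_idx f h) (merge_idx g h) * v g else 0) else 0)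
        = (if h' = h then (\<Sum>g\<in>basis_idx d Z. cnj (v f) * \<rho> (merge_idx f h) (merge_idx g h) * v g) else 0)"
      for f h'
      by (cases "h' = h") (simp_all add: sum.delta[OF fin] h)
    have "(\<Sum>f\<in>basis_idx d Z. \<Sum>g\<in>basis_idx d Z. cnj (v f) * \<rho> (merge_idx f h) (merge_idx g h) * v g)
        = (\<Sum>f\<in>basis_idx d Z. \<Sum>h'\<in>basis_idx d (L - Z). \<Sum>g\<in>basis_idx d Z. \<Sum>h''\<in>basis_idx d (L - Z).
             if h' = h then (if h'' = h then cnj (v f) * \<rho> (merge_idx f h) (merge_idx g h) * v g else 0) else 0)"
      by (simp only: inner) (simp add: sum.delta[OF fin] h)
    also have "\<dots> = (\<Sum>f\<in>basis_idx d Z. \<Sum>h'\<in>basis_idx d (L - Z). \<Sum>g\<in>basis_idx d Z. \<Sum>h''\<in>basis_idx d (L - Z).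
             cnj (w (merge_idx f h')) * \<rho> (merge_idx f h') (merge_idx g h'') * w (merge_idx g h''))"
      by (intro sum.cong refl) (simp add: w)
    also have "\<dots> = (\<Sum>k\<in>basis_idx d L. \<Sum>l\<in>basis_idx d L. cnj (w k) * \<rho> k l * w l)"
      by (simp only: sum_basis_idx_Diff[OF assms(1,2)])
    also have "0 \<le> \<dots>" using assms(3) by (simp add: dens_def)
    finally show "0 \<le> (\<Sum>f\<in>basis_idx d Z. \<Sum>g\<in>basis_idx d Z. cnj (v f) * \<rho> (merge_idx f h) (merge_idx g h) * v g)" .
  qed
  finally show ?thesis .
qed

lemma marginal_in_dens:
  assumes "finite L" "Z \<subseteq> L" "\<rho> \<in> dens d L"
  shows "marginal d L \<rho> Z \<in> dens d Z"
  using marginal_trace[OF assms] marginal_psd[OF assms] unfolding dens_def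
  by (auto simp: marginal_def)

lemma marginal_empty:
  assumes "\<rho> \<in> dens d L"
  shows "marginal d L \<rho> {} (\<lambda>_. 0) (\<lambda>_. 0) = 1"
  using assms by (simp add: marginal_def basis_idx_empty merge_idx_def dens_def)

lemma marginal_tensor_op:
  assumes "finite L" "is_partition L \<gamma>" "\<forall>X\<in>\<gamma>. R X \<in> dens d X"
    and "Y \<in> \<gamma>" "Z \<subseteq> Y" "a \<in> basis_idx d Z" "b \<in> basis_idx d Z"
  shows "marginal d L (tensor_op d L \<gamma> R) Z a b
       = (\<Sum>h\<in>basis_idx d (Y - Z). R Y (merge_idx a h) (merge_idx b h))"
proof -
  note \<gamma> = is_partitionD[OF assms(1,2)]
  have YL: "Y \<subseteq> L" using \<gamma>(5) assms(4) by blast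
  have LZ: "L - Z = (Y - Z) \<union> (L - Y)" using YL assms(5) by blast
  have "(\<Sum>h\<in>basis_idx d (\<Union>X\<in>\<gamma> - {Y}. X). \<Prod>X\<in>\<gamma> - {Y}. (\<lambda>X h. R X h h) X (restr h X))
      = (\<Prod>X\<in>\<gamma> - {Y}. \<Sum>f\<in>basis_idx d X. R X f f)"
    by (rule sum_basis_idx_UN_prod) (use \<gamma> in auto)
  moreover have "(\<Union>X\<in>\<gamma> - {Y}. X) = L - Y" using \<gamma>(3,4) assms(4) by blast
  ultimately have trace_rest: "(\<Sum>h\<in>basis_idx d (L - Y). \<Prod>X\<in>\<gamma> - {Y}. R X (restr h X) (restr h X)) = 1"
    using assms(3) by (simp add: dens_def)
  have factor: "tensor_op d L \<gamma> R (merge_idx u (merge_idx h1 h2)) (merge_idx v (merge_idx h1 h2))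
      = R Y (merge_idx u h1) (merge_idx v h1) * (\<Prod>X\<in>\<gamma> - {Y}. R X (restr h2 X) (restr h2 X))"
    if u: "u \<in> basis_idx d Z" and v: "v \<in> basis_idx d Z"
      and h1: "h1 \<in> basis_idx d (Y - Z)" and h2: "h2 \<in> basis_idx d (L - Y)" for u v h1 h2
  proof -
    have "merge_idx h1 h2 \<in> basis_idx d (L - Z)"
      using merge_idx_in_basis_idx[OF h1 h2] LZ by auto
    then have in_L: "merge_idx w (merge_idx h1 h2) \<in> basis_idx d L" if "w \<in> basis_idx d Z" for w
      using merge_idx_in_basis_idx_Diff[OF that] assms(5) YL by blast
    have "restr (merge_idx w (merge_idx h1 h2)) Y = merge_idx w h1" if "w \<in> basis_idx d Z" for w
      using that h1 h2 assms(5) by (auto simp: restr_def merge_idx_def basis_idx_def fun_eq_iff)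
    moreover have "restr (merge_idx w (merge_idx h1 h2)) X = restr h2 X"
      if "w \<in> basis_idx d Z" "X \<in> \<gamma> - {Y}" for w X
    proof -
      have "X \<inter> Y = {}" using \<gamma>(3) assms(4) that(2) by blast
      then show ?thesis
        using that(1) h1 assms(5) by (auto simp: restr_def merge_idx_def basis_idx_def fun_eq_iff)
    qed
    ultimately show ?thesis
      using u v in_L[OF u] in_L[OF v] \<gamma>(1) assms(4) by (simp add: prod.remove)
  qed
  have "marginal d L (tensor_op d L \<gamma> R) Z a b
      = (\<Sum>h1\<in>basis_idx d (Y - Z). \<Sum>h2\<in>basis_idx d (L - Y).
           tensor_op d L \<gamma> R (merge_idx a (merge_idx h1 h2)) (merge_idx b (merge_idx h1 h2)))"
  proof -
    have "finite (Y - Z)" "finite (L - Y)" "(Y - Z) \<inter> (L - Y) = {}"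
      using assms(1) YL by (auto intro: finite_subset)
    then show ?thesis
      using assms(6,7) LZ sum_basis_idx_Un by (simp add: marginal_def)
  qed
  also have "\<dots> = (\<Sum>h1\<in>basis_idx d (Y - Z). R Y (merge_idx a h1) (merge_idx b h1) *
           (\<Sum>h2\<in>basis_idx d (L - Y). \<Prod>X\<in>\<gamma> - {Y}. R X (restr h2 X) (restr h2 X)))"
    using factor assms(6,7) by (simp add: sum_distrib_left)
  finally show ?thesis by (simp add: trace_rest)
qed

lemma marginal_tensor_op_block:
  assumes "finite L" "is_partition L \<gamma>" "\<forall>X\<in>\<gamma>. R X \<in> dens d X"
    and "X \<in> \<gamma>" "f \<in> basis_idx d X" "g \<in> basis_idx d X"
  shows "marginal d L (tensor_op d L \<gamma> R) X f g = R X f g"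
  using marginal_tensor_op[OF assms(1-4) order_refl assms(5,6)]
  by (simp add: basis_idx_empty merge_idx_def)

lemma marginal_tensor_op_split:
  assumes "finite L" "is_partition L \<beta>" "\<forall>Y\<in>\<beta>. R Y \<in> dens d Y"
    and "X \<subseteq> L" "f \<in> basis_idx d X" "g \<in> basis_idx d X"
  shows "marginal d L (tensor_op d L \<beta> R) X f g
       = (\<Prod>Y\<in>\<beta>. marginal d L (tensor_op d L \<beta> R) (X \<inter> Y) (restr f Y) (restr g Y))"
proof -
  note \<beta> = is_partitionD[OF assms(1,2)]
  have restr_merge: "restr (merge_idx u h) Y = merge_idx (restr u Y) (restr h (Y - X))"
    if "u \<in> basis_idx d X" "h \<in> basis_idx d (L - X)" for u h Y
    using that by (auto simp: restr_def merge_idx_def basis_idx_def fun_eq_iff)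
  have "marginal d L (tensor_op d L \<beta> R) X f g
      = (\<Sum>h\<in>basis_idx d (\<Union>Y\<in>\<beta>. Y - X). \<Prod>Y\<in>\<beta>.
          (\<lambda>Y h'. R Y (merge_idx (restr f Y) h') (merge_idx (restr g Y) h')) Y (restr h (Y - X)))"
  proof -
    have "(\<Union>Y\<in>\<beta>. Y - X) = L - X" using \<beta>(4) by blast
    then show ?thesis
      using assms(4-6) merge_idx_in_basis_idx_Diff restr_merge
      by (auto simp: marginal_def intro!: sum.cong)
  qed
  also have "\<dots> = (\<Prod>Y\<in>\<beta>. \<Sum>h\<in>basis_idx d (Y - X). R Y (merge_idx (restr f Y) h) (merge_idx (restr g Y) h))"
    by (rule sum_basis_idx_UN_prod) (use \<beta> in auto)
  also have "\<dots> = (\<Prod>Y\<in>\<beta>. marginal d L (tensor_op d L \<beta> R) (X \<inter> Y) (restr f Y) (restr g Y))"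
  proof (rule prod.cong[OF refl])
    fix Y assume "Y \<in> \<beta>"
    have "Y - X \<inter> Y = Y - X" by blast
    then show "(\<Sum>h\<in>basis_idx d (Y - X). R Y (merge_idx (restr f Y) h) (merge_idx (restr g Y) h))
        = marginal d L (tensor_op d L \<beta> R) (X \<inter> Y) (restr f Y) (restr g Y)"
      using marginal_tensor_op[OF assms(1-3) \<open>Y \<in> \<beta>\<close> _ restr_in_basis_idx[OF assms(5)]
          restr_in_basis_idx[OF assms(6)]] by simp
  qed
  finally show ?thesis .
qed

lemma tensor_op_eq_meet_marginals:
  assumes L: "finite L" and \<alpha>: "is_partition L \<alpha>" and \<beta>: "is_partition L \<beta>"
    and Ra: "\<forall>X\<in>\<alpha>. Ra X \<in> dens d X" and Rb: "\<forall>Y\<in>\<beta>. Rb Y \<in> dens d Y"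
    and \<rho>: "\<rho> \<in> dens d L" "\<rho> = tensor_op d L \<alpha> Ra" "\<rho> = tensor_op d L \<beta> Rb"
    and k: "k \<in> basis_idx d L" and l: "l \<in> basis_idx d L"
  shows "\<rho> k l = (\<Prod>Z\<in>partition_meet \<alpha> \<beta>. marginal d L \<rho> Z (restr k Z) (restr l Z))"
proof -
  note \<alpha>' = is_partitionD[OF L \<alpha>] and \<beta>' = is_partitionD[OF L \<beta>]
  define T where "T Z = marginal d L \<rho> Z (restr k Z) (restr l Z)" for Z
  have restr_in: "restr k X \<in> basis_idx d X" "restr l X \<in> basis_idx d X" if "X \<subseteq> L" for X
    using restr_in_basis_idx[OF k, of X] restr_in_basis_idx[OF l, of X] that
    by (simp_all add: Int_absorb1)
  have "\<rho> k l = (\<Prod>X\<in>\<alpha>. Ra X (restr k X) (restr l X))"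
    using \<rho>(2) k l by simp
  also have "\<dots> = (\<Prod>X\<in>\<alpha>. T X)"
    using marginal_tensor_op_block[OF L \<alpha> Ra] restr_in \<alpha>'(5) \<rho>(2)
    by (auto simp: T_def intro!: prod.cong)
  also have "\<dots> = (\<Prod>X\<in>\<alpha>. \<Prod>Y\<in>\<beta>. T (X \<inter> Y))"
    using marginal_tensor_op_split[OF L \<beta> Rb] restr_in \<alpha>'(5) \<rho>(3)
    by (auto simp: T_def restr_restr intro!: prod.cong)
  also have "\<dots> = (\<Prod>Z\<in>partition_meet \<alpha> \<beta>. T Z)"
  proof (rule prod_partition_meet[OF \<alpha>'(1) \<beta>'(1) \<alpha>'(3) \<beta>'(3)])
    show "T {} = 1" using marginal_empty[OF \<rho>(1)] by (simp add: T_def restr_def)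
  qed
  finally show ?thesis by (simp add: T_def)
qed

lemma unc_partition_meet:
  assumes "\<alpha> \<in> PI n" "\<beta> \<in> PI n" "\<rho> \<in> unc n d \<alpha>" "\<rho> \<in> unc n d \<beta>"
  shows "\<rho> \<in> unc n d (partition_meet \<alpha> \<beta>)"
proof -
  let ?L = "{1..n}"
  have \<alpha>: "is_partition ?L \<alpha>" and \<beta>: "is_partition ?L \<beta>" using assms(1,2) by (simp_all add: PI_def)
  obtain Ra Rb where \<rho>: "\<rho> \<in> dens d ?L"
    and Ra: "\<forall>X\<in>\<alpha>. Ra X \<in> dens d X" "\<rho> = tensor_op d ?L \<alpha> Ra"
    and Rb: "\<forall>Y\<in>\<beta>. Rb Y \<in> dens d Y" "\<rho> = tensor_op d ?L \<beta> Rb"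
    using assms(3,4) unfolding unc_iff by blast
  have meet: "is_partition ?L (partition_meet \<alpha> \<beta>)" by (rule is_partition_meet[OF \<alpha> \<beta>])
  have "\<forall>Z\<in>partition_meet \<alpha> \<beta>. marginal d ?L \<rho> Z \<in> dens d Z"
    using marginal_in_dens[OF _ _ \<rho>] is_partitionD(5)[OF _ meet] by blast
  moreover have "\<rho> = tensor_op d ?L (partition_meet \<alpha> \<beta>) (marginal d ?L \<rho>)"
  proof (intro ext)
    fix f g
    show "\<rho> f g = tensor_op d ?L (partition_meet \<alpha> \<beta>) (marginal d ?L \<rho>) f g"
      using tensor_op_eq_meet_marginals[OF _ \<alpha> \<beta> Ra(1) Rb(1) \<rho> Ra(2) Rb(2)]
        dens_outside_basis_idx[OF \<rho>]
      by (cases "f \<in> basis_idx d ?L \<and> g \<in> basis_idx d ?L") (auto simp: tensor_op_def)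
  qed
  ultimately show ?thesis using \<rho> unfolding unc_iff by blast
qed

lemma unc_common_partition:
  assumes "finite S" "S \<noteq> {}" "\<forall>\<xi>\<in>S. \<xi> \<in> PII n \<and> \<rho> \<in> unc_set n d \<xi>"
  shows "\<exists>\<pi>\<in>PI n. \<rho> \<in> unc n d \<pi> \<and> (\<forall>\<xi>\<in>S. \<pi> \<in> \<xi>)"
  using assms
proof (induction S rule: finite_ne_induct)
  case (singleton \<xi>)
  then show ?case using PII_subset_PI by (auto simp: unc_set_def)
next
  case (insert \<xi> F)
  then obtain \<pi> where \<pi>: "\<pi> \<in> PI n" "\<rho> \<in> unc n d \<pi>" "\<forall>\<zeta>\<in>F. \<pi> \<in> \<zeta>" by auto
  obtain \<pi>' where \<pi>': "\<pi>' \<in> \<xi>" "\<rho> \<in> unc n d \<pi>'" and \<xi>: "\<xi> \<in> PII n"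
    using insert.prems by (auto simp: unc_set_def)
  let ?\<mu> = "partition_meet \<pi> \<pi>'"
  have "\<pi>' \<in> PI n" using PII_subset_PI[OF \<xi>] \<pi>'(1) by blast
  then have \<mu>: "?\<mu> \<in> PI n" "\<rho> \<in> unc n d ?\<mu>"
    using is_partition_meet unc_partition_meet[OF \<pi>(1) _ \<pi>(2) \<pi>'(2)] \<pi>(1) by (auto simp: PI_def)
  have "?\<mu> \<in> \<xi>" using PII_downward_closed[OF \<xi> \<pi>'(1) \<mu>(1)] refines_partition_meet(2) by blast
  moreover have "?\<mu> \<in> \<zeta>" if "\<zeta> \<in> F" for \<zeta>
    using PII_downward_closed[OF _ _ \<mu>(1) refines_partition_meet(1)] \<pi>(3) insert.prems that by blast
  ultimately show ?case using \<mu> by blast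
qed

section \<open>Products of GHZ states\<close>

definition ind_idx :: "nat set \<Rightarrow> nat \<Rightarrow> nat" where
  "ind_idx S = (\<lambda>i. if i \<in> S then 1 else 0)"

definition ghz_vec :: "(nat \<Rightarrow> nat) \<Rightarrow> nat set \<Rightarrow> (nat \<Rightarrow> nat) \<Rightarrow> complex" where
  "ghz_vec d X f = (if f \<in> basis_idx d X \<and> (f = ind_idx X \<or> f = ind_idx {})
      then complex_of_real (sqrt (1/2)) else 0)"

definition ghz :: "(nat \<Rightarrow> nat) \<Rightarrow> nat set \<Rightarrow> op" where
  "ghz d X = (\<lambda>f g. cnj (ghz_vec d X f) * ghz_vec d X g)"

lemma ind_idx_eq_iff [simp]: "ind_idx S = ind_idx T \<longleftrightarrow> S = T"
  by (auto simp: ind_idx_def fun_eq_iff split: if_splits)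

lemma restr_ind_idx [simp]: "restr (ind_idx S) Y = ind_idx (S \<inter> Y)"
  by (auto simp: ind_idx_def restr_def fun_eq_iff)

lemma ind_idx_in_basis_idx: "S \<subseteq> A \<Longrightarrow> \<forall>i\<in>A. 1 < d i \<Longrightarrow> ind_idx S \<in> basis_idx d A"
  by (auto simp: ind_idx_def basis_idx_def)

lemma ghz_diag:
  "ghz d X f f = (if f \<in> basis_idx d X \<and> (f = ind_idx X \<or> f = ind_idx {}) then 1/2 else 0)"
proof -
  have "cnj (complex_of_real (sqrt (1/2))) * complex_of_real (sqrt (1/2))
      = complex_of_real (sqrt (1/2) * sqrt (1/2))"
    by (simp only: complex_cnj_complex_of_real of_real_mult)
  also have "sqrt (1/2) * sqrt (1/2) = (1/2::real)" by simp
  finally show ?thesis by (simp add: ghz_def ghz_vec_def)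
qed

lemma psd_rank_one: "(0::complex) \<le> (\<Sum>f\<in>A. \<Sum>g\<in>A. cnj (v f) * (cnj (u f) * u g) * v g)"
proof -
  define s where "s = (\<Sum>g\<in>A. u g * v g)"
  have "cnj s * s = (\<Sum>f\<in>A. \<Sum>g\<in>A. cnj (u f * v f) * (u g * v g))"
    by (simp add: s_def cnj_sum sum_product)
  then have "(\<Sum>f\<in>A. \<Sum>g\<in>A. cnj (v f) * (cnj (u f) * u g) * v g) = cnj s * s"
    by (simp add: mult_ac)
  also have "\<dots> = complex_of_real ((cmod s)\<^sup>2)"
    by (metis complex_norm_square mult.commute)
  finally show ?thesis by (simp add: less_eq_complex_def)
qed

lemma ghz_in_dens:
  assumes "X \<noteq> {}" "finite X" "\<forall>i\<in>X. 1 < d i"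
  shows "ghz d X \<in> dens d X"
proof -
  have "(\<Sum>f\<in>basis_idx d X. ghz d X f f)
      = (\<Sum>f\<in>basis_idx d X. if f \<in> {ind_idx X, ind_idx {}} then 1/2 else 0)"
    by (intro sum.cong refl) (simp add: ghz_diag)
  also have "\<dots> = (\<Sum>f\<in>basis_idx d X \<inter> {ind_idx X, ind_idx {}}. 1/2)"
    by (rule sum.inter_restrict[OF finite_basis_idx[OF assms(2)], symmetric])
  also have "basis_idx d X \<inter> {ind_idx X, ind_idx {}} = {ind_idx X, ind_idx {}}"
    using ind_idx_in_basis_idx[OF _ assms(3)] by blast
  finally have "(\<Sum>f\<in>basis_idx d X. ghz d X f f) = 1" using assms(1) by simp
  then show ?thesis
    unfolding dens_def using psd_rank_one by (auto simp: ghz_def ghz_vec_def)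
qed

lemma ghz_tensor_in_unc:
  assumes "\<pi> \<in> PI n" "\<forall>i\<in>{1..n}. 1 < d i"
  shows "tensor_op d {1..n} \<pi> (ghz d) \<in> unc n d \<pi>"
proof -
  let ?L = "{1..n}" and ?\<rho> = "tensor_op d {1..n} \<pi> (ghz d)"
  have \<pi>: "is_partition ?L \<pi>" using assms(1) by (simp add: PI_def)
  note \<pi>' = is_partitionD[OF finite_atLeastAtMost \<pi>]
  have ghz: "\<forall>X\<in>\<pi>. ghz d X \<in> dens d X"
    using ghz_in_dens \<pi>'(2,5,6) assms(2) by (meson subsetD)
  define \<Psi> where "\<Psi> f = (\<Prod>X\<in>\<pi>. ghz_vec d X (restr f X))" for f
  have "?\<rho> f g = cnj (\<Psi> f) * \<Psi> g" if "f \<in> basis_idx d ?L" "g \<in> basis_idx d ?L" for f g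
    using that by (simp add: ghz_def \<Psi>_def prod.distrib cnj_prod)
  then have "0 \<le> (\<Sum>f\<in>basis_idx d ?L. \<Sum>g\<in>basis_idx d ?L. cnj (v f) * ?\<rho> f g * v g)" for v
    using psd_rank_one[of v \<Psi> "basis_idx d ?L"] by (simp cong: sum.cong)
  moreover have "(\<Sum>k\<in>basis_idx d ?L. ?\<rho> k k) = 1"
    using tensor_op_trace[OF finite_atLeastAtMost \<pi>] ghz by (simp add: dens_def)
  ultimately have "?\<rho> \<in> dens d ?L" unfolding dens_def by (auto simp: tensor_op_def)
  then show ?thesis using ghz unfolding unc_iff by blast
qed

lemma ghz_tensor_diag_ind_idx_eq_0_iff:
  assumes "\<pi> \<in> PI n" "\<forall>i\<in>{1..n}. 1 < d i" "S \<subseteq> {1..n}"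
  shows "tensor_op d {1..n} \<pi> (ghz d) (ind_idx S) (ind_idx S) = 0 \<longleftrightarrow> (\<exists>X\<in>\<pi>. X \<inter> S \<noteq> {} \<and> \<not> X \<subseteq> S)"
proof -
  have \<pi>: "is_partition {1..n} \<pi>" using assms(1) by (simp add: PI_def)
  note \<pi>' = is_partitionD[OF finite_atLeastAtMost \<pi>]
  have "ghz d X (ind_idx (S \<inter> X)) (ind_idx (S \<inter> X)) = (if X \<subseteq> S \<or> X \<inter> S = {} then 1/2 else 0)"
    if "X \<in> \<pi>" for X
  proof -
    have "ind_idx (S \<inter> X) \<in> basis_idx d X"
      using ind_idx_in_basis_idx[of "S \<inter> X" X d] \<pi>'(5) that assms(2) by blast
    moreover have "S \<inter> X = X \<longleftrightarrow> X \<subseteq> S" "S \<inter> X = {} \<longleftrightarrow> X \<inter> S = {}" by blast+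
    ultimately show ?thesis by (simp add: ghz_diag)
  qed
  then show ?thesis
    using ind_idx_in_basis_idx[OF assms(3,2)] \<pi>'(1) by (auto simp: prod_zero_iff)
qed

lemma tensor_op_diag_ind_idx_exchange:
  assumes "finite L" "is_partition L \<upsilon>" "\<forall>i\<in>L. 1 < d i" "Y \<in> \<upsilon>" "X \<subseteq> L"
  shows "tensor_op d L \<upsilon> R (ind_idx {}) (ind_idx {}) * tensor_op d L \<upsilon> R (ind_idx X) (ind_idx X)
       = tensor_op d L \<upsilon> R (ind_idx (X - Y)) (ind_idx (X - Y))
       * tensor_op d L \<upsilon> R (ind_idx (X \<inter> Y)) (ind_idx (X \<inter> Y))"
proof -
  note \<upsilon> = is_partitionD[OF assms(1,2)]
  define D where "D Y' S = R Y' (ind_idx S) (ind_idx S)" for Y' S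
  have diag: "tensor_op d L \<upsilon> R (ind_idx S) (ind_idx S) = (\<Prod>Y'\<in>\<upsilon>. D Y' (S \<inter> Y'))" if "S \<subseteq> L" for S
    using ind_idx_in_basis_idx[OF that assms(3)] by (simp add: D_def)
  have blockwise: "D Y' ({} \<inter> Y') * D Y' (X \<inter> Y') = D Y' ((X - Y) \<inter> Y') * D Y' ((X \<inter> Y) \<inter> Y')"
    if "Y' \<in> \<upsilon>" for Y'
  proof (cases "Y' = Y")
    case True
    then have "(X - Y) \<inter> Y' = {}" "(X \<inter> Y) \<inter> Y' = X \<inter> Y'" by auto
    then show ?thesis by simp
  next
    case False
    then have "Y' \<inter> Y = {}" using \<upsilon>(3) that assms(4) by blast
    then have "(X - Y) \<inter> Y' = X \<inter> Y'" "(X \<inter> Y) \<inter> Y' = {}" by auto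
    then show ?thesis by (simp add: mult.commute)
  qed
  have "tensor_op d L \<upsilon> R (ind_idx {}) (ind_idx {}) * tensor_op d L \<upsilon> R (ind_idx X) (ind_idx X)
      = (\<Prod>Y'\<in>\<upsilon>. D Y' ({} \<inter> Y') * D Y' (X \<inter> Y'))"
    using diag[of "{}"] diag[OF assms(5)] by (simp add: prod.distrib)
  also have "\<dots> = (\<Prod>Y'\<in>\<upsilon>. D Y' ((X - Y) \<inter> Y') * D Y' ((X \<inter> Y) \<inter> Y'))"
    using blockwise by (rule prod.cong[OF refl])
  also have "\<dots> = tensor_op d L \<upsilon> R (ind_idx (X - Y)) (ind_idx (X - Y))
      * tensor_op d L \<upsilon> R (ind_idx (X \<inter> Y)) (ind_idx (X \<inter> Y))"
  proof -
    have "X - Y \<subseteq> L" "X \<inter> Y \<subseteq> L" using assms(5) by auto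
    then show ?thesis using diag by (simp add: prod.distrib)
  qed
  finally show ?thesis .
qed

lemma ghz_tensor_unc_imp_refines:
  assumes "\<pi> \<in> PI n" "\<upsilon> \<in> PI n" "\<forall>i\<in>{1..n}. 1 < d i"
    and "tensor_op d {1..n} \<pi> (ghz d) \<in> unc n d \<upsilon>"
  shows "refines \<pi> \<upsilon>"
proof (rule ccontr)
  let ?L = "{1..n}" and ?\<rho> = "tensor_op d {1..n} \<pi> (ghz d)"
  assume "\<not> refines \<pi> \<upsilon>"
  then obtain X where X: "X \<in> \<pi>" "\<forall>Y\<in>\<upsilon>. \<not> X \<subseteq> Y" by (auto simp: refines_def)
  have \<pi>: "is_partition ?L \<pi>" and \<upsilon>: "is_partition ?L \<upsilon>" using assms(1,2) by (simp_all add: PI_def)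
  note \<pi>' = is_partitionD[OF finite_atLeastAtMost \<pi>] and \<upsilon>' = is_partitionD[OF finite_atLeastAtMost \<upsilon>]
  have XL: "X \<subseteq> ?L" using X(1) \<pi>'(5) by blast
  obtain i where "i \<in> X" using X(1) \<pi>'(6) by blast
  then obtain Y where Y: "Y \<in> \<upsilon>" "i \<in> Y" using XL \<upsilon>'(4) by blast
  obtain j where "j \<in> X" "j \<notin> Y" using X(2) Y(1) by blast
  obtain R where "?\<rho> = tensor_op d ?L \<upsilon> R" using assms(4) unfolding unc_iff by blast
  then have "?\<rho> (ind_idx {}) (ind_idx {}) * ?\<rho> (ind_idx X) (ind_idx X)
      = ?\<rho> (ind_idx (X - Y)) (ind_idx (X - Y)) * ?\<rho> (ind_idx (X \<inter> Y)) (ind_idx (X \<inter> Y))"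
    using tensor_op_diag_ind_idx_exchange[OF finite_atLeastAtMost \<upsilon> assms(3) Y(1) XL] by simp
  moreover have "?\<rho> (ind_idx {}) (ind_idx {}) \<noteq> 0"
    using ghz_tensor_diag_ind_idx_eq_0_iff[OF assms(1,3), of "{}"] by simp
  moreover have "\<forall>X'\<in>\<pi>. X' \<inter> X = {} \<or> X' \<subseteq> X" using \<pi>'(3) X(1) by blast
  then have "?\<rho> (ind_idx X) (ind_idx X) \<noteq> 0"
    using ghz_tensor_diag_ind_idx_eq_0_iff[OF assms(1,3) XL] by simp
  moreover have "X \<inter> (X - Y) \<noteq> {}" "\<not> X \<subseteq> X - Y"
    using \<open>i \<in> X\<close> Y(2) \<open>j \<in> X\<close> \<open>j \<notin> Y\<close> by blast+
  then have "?\<rho> (ind_idx (X - Y)) (ind_idx (X - Y)) = 0"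
    using ghz_tensor_diag_ind_idx_eq_0_iff[OF assms(1,3), of "X - Y"] XL X(1) by blast
  ultimately show False by simp
qed

section \<open>Strictly uncorrelated states\<close>

lemma C_unc_imp_not_subset:
  assumes "Pstar \<subseteq> PII n" "\<Xi> \<in> PIII Pstar" "\<rho> \<in> C_unc n d Pstar \<Xi>"
  shows "\<not> (\<Inter>\<Xi> \<subseteq> \<Union>(Pstar - \<Xi>))"
proof
  have \<Xi>: "\<Xi> \<subseteq> PII n" "\<Xi> \<noteq> {}" using assms(1,2) by (auto simp: PIII_def)
  have unc: "\<forall>\<xi>\<in>\<Xi>. \<rho> \<in> unc_set n d \<xi>" and not_unc: "\<forall>\<xi>'\<in>Pstar - \<Xi>. \<rho> \<notin> unc_set n d \<xi>'"
    using assms(3) unfolding C_unc_def by blast+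
  have "\<forall>\<xi>\<in>\<Xi>. \<xi> \<in> PII n \<and> \<rho> \<in> unc_set n d \<xi>" using \<Xi>(1) unc by blast
  from unc_common_partition[OF finite_subset[OF \<Xi>(1) finite_PII] \<Xi>(2) this]
  obtain \<pi> where \<pi>: "\<rho> \<in> unc n d \<pi>" "\<pi> \<in> \<Inter>\<Xi>" by blast
  assume "\<Inter>\<Xi> \<subseteq> \<Union>(Pstar - \<Xi>)"
  then obtain \<xi>' where "\<xi>' \<in> Pstar - \<Xi>" "\<pi> \<in> \<xi>'" using \<pi>(2) by blast
  then show False using not_unc \<pi>(1) by (auto simp: unc_set_def)
qed

lemma ghz_tensor_in_C_unc:
  assumes "\<forall>i\<in>{1..n}. 1 < d i" "Pstar \<subseteq> PII n" "\<Xi> \<in> PIII Pstar"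
    and "\<pi> \<in> \<Inter>\<Xi>" "\<pi> \<notin> \<Union>(Pstar - \<Xi>)"
  shows "tensor_op d {1..n} \<pi> (ghz d) \<in> C_unc n d Pstar \<Xi>"
proof -
  let ?\<rho> = "tensor_op d {1..n} \<pi> (ghz d)"
  obtain \<xi> where "\<xi> \<in> \<Xi>" "\<xi> \<in> PII n" using assms(2,3) by (auto simp: PIII_def)
  then have \<pi>: "\<pi> \<in> PI n" using assms(4) PII_subset_PI by blast
  have unc: "?\<rho> \<in> unc n d \<pi>" by (rule ghz_tensor_in_unc[OF \<pi> assms(1)])
  have "?\<rho> \<notin> unc_set n d \<xi>'" if \<xi>': "\<xi>' \<in> Pstar - \<Xi>" for \<xi>'
  proof
    assume "?\<rho> \<in> unc_set n d \<xi>'"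
    then obtain \<upsilon> where \<upsilon>: "\<upsilon> \<in> \<xi>'" "?\<rho> \<in> unc n d \<upsilon>" by (auto simp: unc_set_def)
    have \<xi>'_PII: "\<xi>' \<in> PII n" using \<xi>' assms(2) by blast
    then have "\<upsilon> \<in> PI n" using PII_subset_PI \<upsilon>(1) by blast
    then have "refines \<pi> \<upsilon>" by (rule ghz_tensor_unc_imp_refines[OF \<pi> _ assms(1) \<upsilon>(2)])
    then have "\<pi> \<in> \<xi>'" by (rule PII_downward_closed[OF \<xi>'_PII \<upsilon>(1) \<pi>])
    then show False using assms(5) \<xi>' by blast
  qed
  moreover have "?\<rho> \<in> dens d {1..n}" using unc by (simp add: unc_def)
  moreover have "?\<rho> \<in> unc_set n d \<xi>" if "\<xi> \<in> \<Xi>" for \<xi>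
    using assms(4) that unc by (auto simp: unc_set_def)
  ultimately show ?thesis unfolding C_unc_def by blast
qed

theorem proposition1:
  fixes n :: nat and d :: "nat \<Rightarrow> nat"
    and Pstar :: "nat set set set set" and \<Xi> :: "nat set set set set"
  assumes "n \<ge> 1"
    and "\<forall>i\<in>{1..n}. 1 < d i"
    and "Pstar \<subseteq> PII n" and "Pstar \<noteq> {}"
    and "\<Xi> \<in> PIII Pstar"
  shows "C_unc n d Pstar \<Xi> \<noteq> {} \<longleftrightarrow> \<not> (\<Inter>\<Xi> \<subseteq> \<Union>(Pstar - \<Xi>))"
proof
  assume "C_unc n d Pstar \<Xi> \<noteq> {}"
  then show "\<not> (\<Inter>\<Xi> \<subseteq> \<Union>(Pstar - \<Xi>))" using C_unc_imp_not_subset[OF assms(3,5)] by blast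
next
  assume "\<not> (\<Inter>\<Xi> \<subseteq> \<Union>(Pstar - \<Xi>))"
  then obtain \<pi> where "\<pi> \<in> \<Inter>\<Xi>" "\<pi> \<notin> \<Union>(Pstar - \<Xi>)" by blast
  then show "C_unc n d Pstar \<Xi> \<noteq> {}" using ghz_tensor_in_C_unc[OF assms(2,3,5)] by blast
qed

end
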